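(* Let $p:E\to X$ be an extremally disconnected bundle. Then $\Gamma^1_p$ is a stonean sheaf (i.e. a sheaf for the dense Grothendieck topology on $\mathcal{O}(X)$), and $\Gamma^{1/2}_p=\Gamma^1_p\restriction\mathrm{RO}(X)^+$ is a sheaf both for the sup Grothendieck topology and for the dense Grothendieck topology on $\mathrm{RO}(X)^+$.
   Context: An extremally disconnected bundle is a continuous map $p:E\to X$ where $E$ is a locally compact Hausdorff space, $X$ is a compact Hausdorff extremally disconnected space (closures of open sets are open), and $p[E]$ is a dense open subset of $X$. $\beta_0(E)=E\cup\{\infty\}$ is the one-point compactification of $E$. A local section of $p$ over an open $D\subseteq X$ is a continuous $s:D\to E$ with $p\circ s=\mathrm{id}_D$. $\mathcal{O}(X)$ is the set of non-empty open subsets of $X$; for $U\in\mathcal{O}(X)$, $\Gamma^1_p(U)$ is the set of continuous $f:U\to\beta_0(E)$ such that $\{x\in U:f(x)\in E\}$ contains an open dense subset $D_f$ of $U$ with $f\restriction D_f$ a local section of $p$ over $D_f$; restriction maps are restriction of functions. $\mathrm{RO}(X)^+$ is the set of non-empty regular open sets ordered by inclusion. For a partial order $P$ and presheaf $\mathcal{F}:P^{\mathrm{op}}\to\mathbf{Set}$ (write $f\restriction s$ for $\mathcal{F}(s\le t)(f)$), a family $\{f_i\in\mathcal{F}(p_i)\}$ is compatible if $f_i\restriction r=f_j\restriction r$ for all $r\le p_i,p_j$; a collation on $p$ is $f\in\mathcal{F}(p)$ with $f\restriction r=f_i\restriction r$ for all $i$ and $r\le p,p_i$; $\{p_i\}$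 is a dense covering of $p$ if for every $q\le p$ some $s$ lies below both $q$ and some $p_i$; if $P$ has all non-empty suprema, $\{p_i\}$ is a complete covering of $p$ if each $p_i\le p$ and $\bigvee p_i=p$. $\mathcal{F}$ is a sheaf for the dense (resp. sup) Grothendieck topology if every compatible family indexed by a dense (resp. complete) covering of $p$ has a unique collation on $p$. *)

theory Defs
  imports "HOL-Analysis.Analysis"
begin

definition extremally_disconnected :: "'a topology \<Rightarrow> bool" where
  "extremally_disconnected X \<longleftrightarrow> (\<forall>U. openin X U \<longrightarrow> openin X (X closure_of U))"

definition ed_bundle :: "'e topology \<Rightarrow> 'x topology \<Rightarrow> ('e \<Rightarrow> 'x) \<Rightarrow> bool" where
  "ed_bundle E X p \<longleftrightarrow>
     locally_compact_space E \<and> Hausdorff_space E \<and>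
     compact_space X \<and> Hausdorff_space X \<and> extremally_disconnected X \<and>
     continuous_map E X p \<and>
     openin X (p ` topspace E) \<and> X closure_of (p ` topspace E) = topspace X"

definition local_section :: "'e topology \<Rightarrow> 'x topology \<Rightarrow> ('e \<Rightarrow> 'x) \<Rightarrow> 'x set \<Rightarrow> ('x \<Rightarrow> 'e) \<Rightarrow> bool" where
  "local_section E X p D s \<longleftrightarrow> continuous_map (subtopology X D) E s \<and> (\<forall>x\<in>D. p (s x) = x)"

definition nonempty_opens :: "'x topology \<Rightarrow> 'x set set" where
  "nonempty_opens X = {U. openin X U \<and> U \<noteq> {}}"

definition regular_open :: "'x topology \<Rightarrow> 'x set \<Rightarrow> bool" where
  "regular_open X U \<longleftrightarrow> X interior_of (X closure_of U) = U"

definition nonempty_regular_opens :: "'x topology \<Rightarrow> 'x set set" where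
  "nonempty_regular_opens X = {U. regular_open X U \<and> U \<noteq> {}}"

text \<open>The one-point compactification beta_0(E) is
  \<open>Alexandroff_compactification E\<close> on \<open>'e option\<close>, with \<open>None\<close> the point at infinity
  and \<open>Some\<close> the embedding of E.  Sections over U are functions on U, made
  extensional (value \<open>undefined\<close> outside U); restriction is \<open>restrict\<close>.\<close>
definition Gamma1 :: "'e topology \<Rightarrow> 'x topology \<Rightarrow> ('e \<Rightarrow> 'x) \<Rightarrow> 'x set \<Rightarrow> ('x \<Rightarrow> 'e option) set" where
  "Gamma1 E X p U = {f.
      continuous_map (subtopology X U) (Alexandroff_compactification E) f \<and>
      (\<exists>D. openin (subtopology X U) D \<and> U \<subseteq> X closure_of D \<and>
           D \<subseteq> {x \<in> U. f x \<in> Some ` topspace E} \<and>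
           local_section E X p D (\<lambda>x. the (f x))) \<and>
      (\<forall>x. x \<notin> U \<longrightarrow> f x = undefined)}"

definition restr_sec :: "'x set \<Rightarrow> ('x \<Rightarrow> 'b) \<Rightarrow> ('x \<Rightarrow> 'b)" where
  "restr_sec V f = restrict f V"

text \<open>Generic presheaves on a partial order (P, le), given by the sets F q of
  sections over q and a restriction operation res s f (restriction of f to s).\<close>
definition compatible_family ::
  "'p set \<Rightarrow> ('p \<Rightarrow> 'p \<Rightarrow> bool) \<Rightarrow> ('p \<Rightarrow> 'f set) \<Rightarrow> ('p \<Rightarrow> 'f \<Rightarrow> 'f) \<Rightarrow> 'p set \<Rightarrow> ('p \<Rightarrow> 'f) \<Rightarrow> bool" where
  "compatible_family P le F res C f \<longleftrightarrow>
     (\<forall>c\<in>C. f c \<in> F c) \<and>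
     (\<forall>c\<in>C. \<forall>d\<in>C. \<forall>r\<in>P. le r c \<and> le r d \<longrightarrow> res r (f c) = res r (f d))"

definition is_collation ::
  "'p set \<Rightarrow> ('p \<Rightarrow> 'p \<Rightarrow> bool) \<Rightarrow> ('p \<Rightarrow> 'f set) \<Rightarrow> ('p \<Rightarrow> 'f \<Rightarrow> 'f) \<Rightarrow> 'p set \<Rightarrow> ('p \<Rightarrow> 'f) \<Rightarrow> 'p \<Rightarrow> 'f \<Rightarrow> bool" where
  "is_collation P le F res C f q g \<longleftrightarrow>
     g \<in> F q \<and> (\<forall>c\<in>C. \<forall>r\<in>P. le r q \<and> le r c \<longrightarrow> res r g = res r (f c))"

definition dense_covering :: "'p set \<Rightarrow> ('p \<Rightarrow> 'p \<Rightarrow> bool) \<Rightarrow> 'p set \<Rightarrow> 'p \<Rightarrow> bool" where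
  "dense_covering P le C q \<longleftrightarrow> C \<subseteq> P \<and>
     (\<forall>q'\<in>P. le q' q \<longrightarrow> (\<exists>s\<in>P. \<exists>c\<in>C. le s q' \<and> le s c))"

definition complete_covering :: "'p set \<Rightarrow> ('p \<Rightarrow> 'p \<Rightarrow> bool) \<Rightarrow> 'p set \<Rightarrow> 'p \<Rightarrow> bool" where
  "complete_covering P le C q \<longleftrightarrow> C \<subseteq> P \<and> C \<noteq> {} \<and>
     (\<forall>c\<in>C. le c q) \<and> (\<forall>u\<in>P. (\<forall>c\<in>C. le c u) \<longrightarrow> le q u)"

definition is_sheaf_for ::
  "'p set \<Rightarrow> ('p \<Rightarrow> 'p \<Rightarrow> bool) \<Rightarrow> ('p \<Rightarrow> 'f set) \<Rightarrow> ('p \<Rightarrow> 'f \<Rightarrow> 'f) \<Rightarrow> ('p set \<Rightarrow> 'p \<Rightarrow> bool) \<Rightarrow> bool" where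
  "is_sheaf_for P le F res Cov \<longleftrightarrow>
     (\<forall>q\<in>P. \<forall>C f. Cov C q \<and> compatible_family P le F res C f \<longrightarrow>
        (\<exists>!g. is_collation P le F res C f q g))"

end

theory Submission
  imports Defs
begin

text \<open>In all three
  Grothendieck topologies the members of a covering of \<open>q\<close> have dense union in \<open>q\<close> (in
  \<open>RO(X)\<^sup>+\<close> because regular open sets of an extremally disconnected space are clopen).
  A compatible family pastes to a continuous map on this dense open union, and since \<open>X\<close> is
  extremally disconnected, such a map into a compact Hausdorff space extends continuously to
  \<open>q\<close>: the extension takes at \<open>x\<close> the cluster value of the map at \<open>x\<close>, which is unique because
  disjoint open sets have disjoint closures. The union of the dense domains of the family
  is dense in \<open>q\<close>, so the extension is a section; it is the only collation because \<open>\<beta>\<^sub>0(E)\<close> is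
  Hausdorff.\<close>

section \<open>Continuous extension from dense open subspaces\<close>

lemma extremally_disconnected_disjoint_closures:
  assumes "extremally_disconnected X" "openin X U" "openin X V" "U \<inter> V = {}"
  shows "X closure_of U \<inter> X closure_of V = {}"
proof -
  have "openin X (X closure_of U)"
    using assms(1,2) by (simp add: extremally_disconnected_def)
  moreover have "X closure_of U \<inter> V = {}"
    using openin_Int_closure_of_eq_empty[OF assms(3), of U] assms(4) by blast
  ultimately show ?thesis
    using openin_Int_closure_of_eq_empty by blast
qed

lemma openin_preimage_open_subtopology:
  assumes W: "openin X W" and F: "continuous_map (subtopology X W) K F" and A: "openin K A"
  shows "openin X {w \<in> W. F w \<in> A}"
proof -
  have "openin (subtopology X W) {w \<in> topspace (subtopology X W). F w \<in> A}"
    using F A by (rule openin_continuous_map_preimage)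
  moreover have "{w \<in> topspace (subtopology X W). F w \<in> A} = {w \<in> W. F w \<in> A}"
    using openin_subset[OF W] by auto
  ultimately show ?thesis
    using openin_trans_full[OF _ W] by simp
qed

definition cluster_value :: "'x topology \<Rightarrow> 'k topology \<Rightarrow> 'x set \<Rightarrow> ('x \<Rightarrow> 'k) \<Rightarrow> 'x \<Rightarrow> 'k \<Rightarrow> bool"
  where "cluster_value X K W F x a \<longleftrightarrow>
    a \<in> topspace K \<and> (\<forall>A. openin K A \<and> a \<in> A \<longrightarrow> x \<in> X closure_of {w \<in> W. F w \<in> A})"

lemma cluster_value_self:
  assumes "x \<in> W" "W \<subseteq> topspace X" "F x \<in> topspace K"
  shows "cluster_value X K W F x (F x)"
  unfolding cluster_value_def
proof (intro conjI allI impI)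
  fix A assume "openin K A \<and> F x \<in> A"
  then have "x \<in> {w \<in> W. F w \<in> A}"
    using assms(1) by simp
  moreover have "{w \<in> W. F w \<in> A} \<subseteq> topspace X"
    using assms(2) by blast
  ultimately show "x \<in> X closure_of {w \<in> W. F w \<in> A}"
    using closure_of_subset by blast
qed (rule assms(3))

lemma compact_space_adherent_point_of_images:
  assumes K: "compact_space K" and F: "F ` W \<subseteq> topspace K" and x: "x \<in> X closure_of W"
  shows "\<exists>a. \<forall>N. openin X N \<and> x \<in> N \<longrightarrow> a \<in> K closure_of (F ` (N \<inter> W))"
proof -
  have xX: "x \<in> topspace X"
    using x in_closure_of by fast
  define \<U> where "\<U> = (\<lambda>N. K closure_of (F ` (N \<inter> W))) ` {N. openin X N \<and> x \<in> N}"
  have closed: "\<forall>U\<in>\<U>. closedin K U"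
    unfolding \<U>_def by simp
  have fip: "\<forall>\<F>. finite \<F> \<and> \<F> \<subseteq> \<U> \<longrightarrow> \<Inter>\<F> \<noteq> {}"
  proof (intro allI impI notI, elim conjE)
    fix \<F> assume "finite \<F>" "\<F> \<subseteq> \<U>" "\<Inter>\<F> = {}"
    obtain \<N> where \<N>: "\<N> \<subseteq> {N. openin X N \<and> x \<in> N}" "finite \<N>"
      and \<F>: "\<F> = (\<lambda>N. K closure_of (F ` (N \<inter> W))) ` \<N>"
      using finite_subset_image[OF \<open>finite \<F>\<close> \<open>\<F> \<subseteq> \<U>\<close>[unfolded \<U>_def]] by blast
    define N0 where "N0 = (\<Inter>N\<in>\<N>. N) \<inter> topspace X"
    have "openin X N0"
      unfolding N0_def using \<N> by (intro openin_INT) auto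
    moreover have "x \<in> N0"
      unfolding N0_def using \<N>(1) xX by blast
    ultimately obtain w where w: "w \<in> W" "w \<in> N0"
      using x unfolding in_closure_of by blast
    have "F w \<in> K closure_of (F ` (N \<inter> W))" if "N \<in> \<N>" for N
    proof -
      have "F w \<in> F ` (N \<inter> W)"
        using w that unfolding N0_def by blast
      moreover have "F ` (N \<inter> W) \<subseteq> topspace K"
        using F by blast
      ultimately show ?thesis
        using closure_of_subset by blast
    qed
    then show False
      using \<F> \<open>\<Inter>\<F> = {}\<close> by blast
  qed
  have "\<Inter>\<U> \<noteq> {}"
    using compact_space_fip[THEN iffD1, OF K, THEN spec[of _ \<U>]] closed fip by blast
  then obtain a where "a \<in> \<Inter>\<U>"
    by blast
  then show ?thesis
    unfolding \<U>_def by blast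
qed

lemma cluster_value_exists:
  assumes K: "compact_space K" and F: "F ` W \<subseteq> topspace K" and x: "x \<in> X closure_of W"
  shows "\<exists>a. cluster_value X K W F x a"
proof -
  have xX: "x \<in> topspace X"
    using x in_closure_of by fast
  obtain a where a: "\<And>N. openin X N \<Longrightarrow> x \<in> N \<Longrightarrow> a \<in> K closure_of (F ` (N \<inter> W))"
    using compact_space_adherent_point_of_images[OF K F x] by blast
  have "cluster_value X K W F x a"
    unfolding cluster_value_def
  proof (intro conjI allI impI)
    have "a \<in> K closure_of (F ` (topspace X \<inter> W))"
      using a xX by simp
    then show "a \<in> topspace K"
      by (rule closure_of_subset_topspace[THEN subsetD])
    fix A assume A: "openin K A \<and> a \<in> A"
    show "x \<in> X closure_of {w \<in> W. F w \<in> A}"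
      unfolding in_closure_of
    proof (intro conjI allI impI xX)
      fix N assume "x \<in> N \<and> openin X N"
      then have "A \<inter> K closure_of (F ` (N \<inter> W)) \<noteq> {}"
        using a A by blast
      then have "A \<inter> F ` (N \<inter> W) \<noteq> {}"
        using A openin_Int_closure_of_eq_empty by blast
      then show "\<exists>y. y \<in> {w \<in> W. F w \<in> A} \<and> y \<in> N"
        by blast
    qed
  qed
  then show ?thesis ..
qed

lemma extremally_disconnected_cluster_value_unique:
  assumes ED: "extremally_disconnected X" and K: "Hausdorff_space K"
    and W: "openin X W" and F: "continuous_map (subtopology X W) K F"
    and a: "cluster_value X K W F x a" and b: "cluster_value X K W F x b"
  shows "a = b"
proof (rule ccontr)
  assume "a \<noteq> b"
  moreover have "a \<in> topspace K" "b \<in> topspace K"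
    using a b unfolding cluster_value_def by auto
  ultimately obtain A B where AB: "openin K A" "openin K B" "a \<in> A" "b \<in> B" "disjnt A B"
    using K unfolding Hausdorff_space_def by metis
  have "x \<in> X closure_of {w \<in> W. F w \<in> A}" "x \<in> X closure_of {w \<in> W. F w \<in> B}"
    using a b AB unfolding cluster_value_def by auto
  moreover have "X closure_of {w \<in> W. F w \<in> A} \<inter> X closure_of {w \<in> W. F w \<in> B} = {}"
  proof (rule extremally_disconnected_disjoint_closures[OF ED])
    show "openin X {w \<in> W. F w \<in> A}" "openin X {w \<in> W. F w \<in> B}"
      using openin_preimage_open_subtopology[OF W F] AB(1,2) by blast+
    show "{w \<in> W. F w \<in> A} \<inter> {w \<in> W. F w \<in> B} = {}"
      using AB(5) by (auto simp: disjnt_def)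
  qed
  ultimately show False
    by blast
qed

lemma extremally_disconnected_cluster_value_in_closed:
  assumes ED: "extremally_disconnected X"
    and W: "openin X W" and F: "continuous_map (subtopology X W) K F"
    and U: "openin K U" and V: "closedin K V" "U \<subseteq> V"
    and b: "cluster_value X K W F y b" and y: "y \<in> X closure_of {w \<in> W. F w \<in> U}"
  shows "b \<in> V"
proof (rule ccontr)
  assume "b \<notin> V"
  moreover have V': "openin K (topspace K - V)"
    using V(1) by blast
  moreover have "b \<in> topspace K"
    using b unfolding cluster_value_def by blast
  ultimately have "y \<in> X closure_of {w \<in> W. F w \<in> topspace K - V}"
    using b unfolding cluster_value_def by blast
  moreover have "X closure_of {w \<in> W. F w \<in> U} \<inter> X closure_of {w \<in> W. F w \<in> topspace K - V} = {}"
  proof (rule extremally_disconnected_disjoint_closures[OF ED])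
    show "openin X {w \<in> W. F w \<in> U}"
      using W F U by (rule openin_preimage_open_subtopology)
    show "openin X {w \<in> W. F w \<in> topspace K - V}"
      using W F V' by (rule openin_preimage_open_subtopology)
    show "{w \<in> W. F w \<in> U} \<inter> {w \<in> W. F w \<in> topspace K - V} = {}"
      using V(2) by blast
  qed
  ultimately show False
    using y by blast
qed

text \<open>Given \<open>G x \<in> U \<subseteq> V \<subseteq> A\<close> with \<open>U\<close> open and \<open>V\<close> closed, the closure of the open set
  \<open>{w \<in> W. F w \<in> U}\<close> is an open neighbourhood of \<open>x\<close> on which \<open>G\<close> stays in \<open>V\<close>.\<close>
lemma extremally_disconnected_continuous_map_cluster_value:
  assumes ED: "extremally_disconnected X" and K: "regular_space K"
    and W: "openin X W" and F: "continuous_map (subtopology X W) K F"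
    and G: "\<And>x. x \<in> q \<Longrightarrow> cluster_value X K W F x (G x)"
  shows "continuous_map (subtopology X q) K G"
  unfolding continuous_map_def
proof (intro conjI allI impI)
  show "G \<in> topspace (subtopology X q) \<rightarrow> topspace K"
    using G by (auto simp: cluster_value_def)
  fix A assume A: "openin K A"
  show "openin (subtopology X q) {x \<in> topspace (subtopology X q). G x \<in> A}"
    unfolding openin_subopen[of _ "{x \<in> topspace (subtopology X q). G x \<in> A}"]
  proof clarify
    fix x assume x: "x \<in> topspace (subtopology X q)" "G x \<in> A"
    have "neighbourhood_base_of (closedin K) K"
      by (simp add: neighbourhood_base_of_closedin K)
    then have "\<exists>U V. openin K U \<and> closedin K V \<and> G x \<in> U \<and> U \<subseteq> V \<and> V \<subseteq> A"
      using A x(2) unfolding neighbourhood_base_of by blast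
    then obtain U V where UV: "openin K U" "closedin K V" "G x \<in> U" "U \<subseteq> V" "V \<subseteq> A"
      by blast
    define S where "S = {w \<in> W. F w \<in> U}"
    have S: "openin X S"
      unfolding S_def using W F UV(1) by (rule openin_preimage_open_subtopology)
    have "G y \<in> V" if "y \<in> q" "y \<in> X closure_of S" for y
      using that(2) unfolding S_def
      by (rule extremally_disconnected_cluster_value_in_closed[OF ED W F UV(1,2,4) G[OF that(1)]])
    moreover have "x \<in> X closure_of S"
      using G x UV(1,3) unfolding cluster_value_def S_def by auto
    moreover have "openin X (X closure_of S)"
      using ED S by (simp add: extremally_disconnected_def)
    moreover have "q \<inter> X closure_of S \<subseteq> topspace (subtopology X q)"
      using closure_of_subset_topspace by fastforce
    ultimately show "\<exists>T. openin (subtopology X q) T \<and> x \<in> T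
        \<and> T \<subseteq> {x \<in> topspace (subtopology X q). G x \<in> A}"
      using x(1) UV(5) by (intro exI[of _ "q \<inter> X closure_of S"]) (auto intro: openin_subtopology_Int2)
  qed
qed

theorem extremally_disconnected_continuous_extension:
  assumes ED: "extremally_disconnected X" and K: "compact_space K" "Hausdorff_space K"
    and W: "openin X W" and F: "continuous_map (subtopology X W) K F"
    and q: "q \<subseteq> X closure_of W"
  shows "\<exists>G. continuous_map (subtopology X q) K G \<and> (\<forall>x\<in>W. G x = F x)"
proof -
  have FW: "F ` W \<subseteq> topspace K"
    using continuous_map_image_subset_topspace[OF F] openin_subset[OF W] by (simp add: Int_absorb1)
  define G where "G x = (THE a. cluster_value X K W F x a)" for x
  have G: "G x = a" if "cluster_value X K W F x a" for x a
    unfolding G_def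
    using that extremally_disconnected_cluster_value_unique[OF ED K(2) W F] by blast
  have "continuous_map (subtopology X q) K G"
  proof (rule extremally_disconnected_continuous_map_cluster_value[OF ED _ W F])
    show "regular_space K"
      using K compact_Hausdorff_imp_regular_space by blast
    fix x assume "x \<in> q"
    then obtain a where "cluster_value X K W F x a"
      using cluster_value_exists[OF K(1) FW] q by blast
    then show "cluster_value X K W F x (G x)"
      using G by simp
  qed
  moreover have "G x = F x" if "x \<in> W" for x
    using that FW openin_subset[OF W] by (intro G cluster_value_self) auto
  ultimately show ?thesis
    by blast
qed

section \<open>Pasting continuous maps and local sections\<close>

lemma continuous_map_open_Union:
  assumes "\<And>c. c \<in> C \<Longrightarrow> openin X (U c)"
    and "\<And>c. c \<in> C \<Longrightarrow> continuous_map (subtopology X (U c)) Y g"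
  shows "continuous_map (subtopology X (\<Union>c\<in>C. U c)) Y g"
proof (rule pasting_lemma[where I=C and T=U and f="\<lambda>_. g"])
  fix c assume c: "c \<in> C"
  show "openin (subtopology X (\<Union>c\<in>C. U c)) (U c)"
    unfolding openin_subtopology using assms(1) c by blast
  show "continuous_map (subtopology (subtopology X (\<Union>c\<in>C. U c)) (U c)) Y g"
    using assms(2)[OF c] c by (simp add: subtopology_subtopology Int_absorb1 UN_upper)
next
  fix x assume "x \<in> topspace (subtopology X (\<Union>c\<in>C. U c))"
  then show "\<exists>c. c \<in> C \<and> x \<in> U c \<and> g x = g x"
    by auto
qed simp

lemma continuous_map_open_Union_paste:
  assumes U: "\<And>c. c \<in> C \<Longrightarrow> openin X (U c)"
    and f: "\<And>c. c \<in> C \<Longrightarrow> continuous_map (subtopology X (U c)) Y (f c)"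
    and agree: "\<And>c d x. c \<in> C \<Longrightarrow> d \<in> C \<Longrightarrow> x \<in> U c \<Longrightarrow> x \<in> U d \<Longrightarrow> f c x = f d x"
  shows "\<exists>g. continuous_map (subtopology X (\<Union>c\<in>C. U c)) Y g \<and> (\<forall>c\<in>C. \<forall>x\<in>U c. g x = f c x)"
proof -
  define g where "g x = f (SOME c. c \<in> C \<and> x \<in> U c) x" for x
  have g: "g x = f c x" if "c \<in> C" "x \<in> U c" for c x
    unfolding g_def by (rule someI2[of _ c]) (use that agree in blast)+
  have "continuous_map (subtopology X (\<Union>c\<in>C. U c)) Y g"
  proof (rule continuous_map_open_Union[OF U])
    fix c assume c: "c \<in> C"
    show "continuous_map (subtopology X (U c)) Y g"
      by (rule continuous_map_eq[OF f[OF c]]) (simp add: g[OF c])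
  qed
  then show ?thesis
    using g by blast
qed

lemma local_section_subset:
  assumes "local_section E X p D s" "D' \<subseteq> D" "\<And>x. x \<in> D' \<Longrightarrow> s' x = s x"
  shows "local_section E X p D' s'"
  using assms continuous_map_from_subtopology_mono[of X D E s D']
  unfolding local_section_def by (auto intro: continuous_map_eq)

lemma local_section_open_Union:
  assumes "\<And>c. c \<in> C \<Longrightarrow> openin X (D c)" "\<And>c. c \<in> C \<Longrightarrow> local_section E X p (D c) s"
  shows "local_section E X p (\<Union>c\<in>C. D c) s"
  using assms continuous_map_open_Union[of C X D E s] unfolding local_section_def by blast

lemma closure_of_Union_Int_mono:
  assumes "openin X q" "\<And>c. c \<in> C \<Longrightarrow> openin X c" "\<And>c. c \<in> C \<Longrightarrow> c \<subseteq> X closure_of (D c)"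
  shows "X closure_of (\<Union>c\<in>C. c \<inter> q) \<subseteq> X closure_of (\<Union>c\<in>C. D c \<inter> q)"
proof (rule closure_of_minimal[OF UN_least closedin_closure_of])
  fix c assume c: "c \<in> C"
  have "c \<inter> q \<subseteq> (c \<inter> q) \<inter> X closure_of (D c)"
    using assms(3)[OF c] by blast
  also have "\<dots> \<subseteq> X closure_of (c \<inter> q \<inter> D c)"
    using assms(1) assms(2)[OF c] by (intro openin_Int_closure_of_subset) auto
  also have "\<dots> \<subseteq> X closure_of (\<Union>c\<in>C. D c \<inter> q)"
    using c by (intro closure_of_mono) blast
  finally show "c \<inter> q \<subseteq> X closure_of (\<Union>c\<in>C. D c \<inter> q)" .
qed

section \<open>Compatible families and collations of functions\<close>

lemma restr_sec_eq_iff: "restr_sec r f = restr_sec r g \<longleftrightarrow> (\<forall>x\<in>r. f x = g x)"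
  by (auto simp: restr_sec_def restrict_def fun_eq_iff)

lemma compatible_family_restr_sec_iff:
  assumes "C \<subseteq> P" and P: "\<And>c d. c \<in> P \<Longrightarrow> d \<in> P \<Longrightarrow> c \<inter> d \<noteq> {} \<Longrightarrow> c \<inter> d \<in> P"
  shows "compatible_family P (\<subseteq>) F restr_sec C f \<longleftrightarrow>
    (\<forall>c\<in>C. f c \<in> F c) \<and> (\<forall>c\<in>C. \<forall>d\<in>C. \<forall>x\<in>c \<inter> d. f c x = f d x)"
proof -
  have "(\<forall>c\<in>C. \<forall>d\<in>C. \<forall>r\<in>P. r \<subseteq> c \<and> r \<subseteq> d \<longrightarrow> restr_sec r (f c) = restr_sec r (f d))
      \<longleftrightarrow> (\<forall>c\<in>C. \<forall>d\<in>C. \<forall>x\<in>c \<inter> d. f c x = f d x)" (is "?restr \<longleftrightarrow> ?pointwise")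
  proof
    assume ?restr
    show ?pointwise
    proof (intro ballI)
      fix c d x assume cd: "c \<in> C" "d \<in> C" and x: "x \<in> c \<inter> d"
      then have "c \<inter> d \<in> P"
        using assms(1) P[of c d] by blast
      then show "f c x = f d x"
        using \<open>?restr\<close> cd x unfolding restr_sec_eq_iff by blast
    qed
  qed (unfold restr_sec_eq_iff, blast)
  then show ?thesis
    unfolding compatible_family_def by (rule arg_cong)
qed

lemma is_collation_restr_sec_iff:
  assumes "C \<subseteq> P" "q \<in> P" and P: "\<And>c d. c \<in> P \<Longrightarrow> d \<in> P \<Longrightarrow> c \<inter> d \<noteq> {} \<Longrightarrow> c \<inter> d \<in> P"
  shows "is_collation P (\<subseteq>) F restr_sec C f q g \<longleftrightarrow>
    g \<in> F q \<and> (\<forall>c\<in>C. \<forall>x\<in>c \<inter> q. g x = f c x)"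
proof -
  have "(\<forall>c\<in>C. \<forall>r\<in>P. r \<subseteq> q \<and> r \<subseteq> c \<longrightarrow> restr_sec r g = restr_sec r (f c))
      \<longleftrightarrow> (\<forall>c\<in>C. \<forall>x\<in>c \<inter> q. g x = f c x)" (is "?restr \<longleftrightarrow> ?pointwise")
  proof
    assume ?restr
    show ?pointwise
    proof (intro ballI)
      fix c x assume c: "c \<in> C" and x: "x \<in> c \<inter> q"
      then have "c \<inter> q \<in> P"
        using assms(1,2) P[of c q] by blast
      then show "g x = f c x"
        using \<open>?restr\<close> c x unfolding restr_sec_eq_iff by blast
    qed
  qed (unfold restr_sec_eq_iff, blast)
  then show ?thesis
    unfolding is_collation_def by (rule arg_cong)
qed

section \<open>Gluing sections of \<open>\<Gamma>\<^sup>1\<^sub>p\<close>\<close>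

lemma extremally_disconnected_glue:
  assumes ED: "extremally_disconnected X" and K: "compact_space K" "Hausdorff_space K"
    and q: "openin X q" and C: "\<And>c. c \<in> C \<Longrightarrow> openin X c"
    and f: "\<And>c. c \<in> C \<Longrightarrow> continuous_map (subtopology X c) K (f c)"
    and agree: "\<And>c d x. c \<in> C \<Longrightarrow> d \<in> C \<Longrightarrow> x \<in> c \<inter> d \<Longrightarrow> f c x = f d x"
    and dense: "q \<subseteq> X closure_of (\<Union>c\<in>C. c \<inter> q)"
  shows "\<exists>g. continuous_map (subtopology X q) K g \<and> (\<forall>c\<in>C. \<forall>x\<in>c \<inter> q. g x = f c x)"
proof -
  define W where "W = (\<Union>c\<in>C. c \<inter> q)"
  have W: "openin X W"
    unfolding W_def using C q by blast
  have "\<exists>F. continuous_map (subtopology X W) K F \<and> (\<forall>c\<in>C. \<forall>x\<in>c \<inter> q. F x = f c x)"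
    unfolding W_def
  proof (rule continuous_map_open_Union_paste)
    fix c assume c: "c \<in> C"
    show "openin X (c \<inter> q)"
      using C[OF c] q by blast
    show "continuous_map (subtopology X (c \<inter> q)) K (f c)"
      using f[OF c] by (rule continuous_map_from_subtopology_mono) blast
  next
    fix c d x assume "c \<in> C" "d \<in> C" "x \<in> c \<inter> q" "x \<in> d \<inter> q"
    then show "f c x = f d x"
      using agree by blast
  qed
  then obtain F where F: "continuous_map (subtopology X W) K F"
    and F_f: "\<forall>c\<in>C. \<forall>x\<in>c \<inter> q. F x = f c x"
    by blast
  obtain G where G: "continuous_map (subtopology X q) K G" and G_F: "\<forall>x\<in>W. G x = F x"
    using extremally_disconnected_continuous_extension[OF ED K W F dense[folded W_def]] by blast
  have "G x = f c x" if "c \<in> C" "x \<in> c \<inter> q" for c x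
  proof -
    have "x \<in> W"
      using that unfolding W_def by blast
    then show ?thesis
      using that by (simp add: G_F F_f)
  qed
  then show ?thesis
    using G by blast
qed

lemma Gamma1_dense_domain:
  assumes "f \<in> Gamma1 E X p c" "openin X c"
  shows "\<exists>D. openin X D \<and> D \<subseteq> c \<and> c \<subseteq> X closure_of D \<and> (\<forall>x\<in>D. f x \<in> Some ` topspace E)
    \<and> local_section E X p D (\<lambda>x. the (f x))"
proof -
  obtain D where D: "openin (subtopology X c) D" "c \<subseteq> X closure_of D"
    "D \<subseteq> {x \<in> c. f x \<in> Some ` topspace E}" "local_section E X p D (\<lambda>x. the (f x))"
    using assms(1) unfolding Gamma1_def by blast
  moreover have "openin X D"
    using openin_trans_full[OF D(1) assms(2)] .
  ultimately show ?thesis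
    by blast
qed

lemma Gamma1_memI_dense_cover:
  assumes q: "openin X q" and C: "\<And>c. c \<in> C \<Longrightarrow> openin X c"
    and f: "\<And>c. c \<in> C \<Longrightarrow> f c \<in> Gamma1 E X p c"
    and dense: "q \<subseteq> X closure_of (\<Union>c\<in>C. c \<inter> q)"
    and g: "continuous_map (subtopology X q) (Alexandroff_compactification E) g"
    and g_f: "\<And>c x. c \<in> C \<Longrightarrow> x \<in> c \<inter> q \<Longrightarrow> g x = f c x"
    and g_undefined: "\<And>x. x \<notin> q \<Longrightarrow> g x = undefined"
  shows "g \<in> Gamma1 E X p q"
proof -
  have "\<forall>c\<in>C. \<exists>D. openin X D \<and> D \<subseteq> c \<and> c \<subseteq> X closure_of D
      \<and> (\<forall>x\<in>D. f c x \<in> Some ` topspace E) \<and> local_section E X p D (\<lambda>x. the (f c x))"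
    using Gamma1_dense_domain[OF f C] by blast
  then obtain D where "\<forall>c\<in>C. openin X (D c) \<and> D c \<subseteq> c \<and> c \<subseteq> X closure_of (D c)
      \<and> (\<forall>x\<in>D c. f c x \<in> Some ` topspace E) \<and> local_section E X p (D c) (\<lambda>x. the (f c x))"
    by (rule bchoice[THEN exE])
  then have D_open: "openin X (D c)" and D_sub: "D c \<subseteq> c" and D_dense: "c \<subseteq> X closure_of (D c)"
    and D_Some: "\<forall>x\<in>D c. f c x \<in> Some ` topspace E"
    and D_sec: "local_section E X p (D c) (\<lambda>x. the (f c x))" if "c \<in> C" for c
    using that by auto
  define DD where "DD = (\<Union>c\<in>C. D c \<inter> q)"
  have DD: "openin X DD"
    unfolding DD_def using D_open q by blast
  show ?thesis
    unfolding Gamma1_def mem_Collect_eq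
  proof (intro conjI exI[of _ DD] allI impI g g_undefined)
    show "openin (subtopology X q) DD"
      using DD openin_open_subtopology[OF q] unfolding DD_def by blast
    show "q \<subseteq> X closure_of DD"
      using dense closure_of_Union_Int_mono[OF q C D_dense] unfolding DD_def by blast
    show "DD \<subseteq> {x \<in> q. g x \<in> Some ` topspace E}"
      using D_Some D_sub g_f unfolding DD_def by fastforce
    show "local_section E X p DD (\<lambda>x. the (g x))"
      unfolding DD_def
    proof (rule local_section_open_Union)
      fix c assume c: "c \<in> C"
      show "openin X (D c \<inter> q)"
        using D_open[OF c] q by blast
      show "local_section E X p (D c \<inter> q) (\<lambda>x. the (g x))"
        using D_sec[OF c] by (rule local_section_subset) (use D_sub[OF c] g_f[OF c] in auto)
    qed
  qed
qed

lemma Gamma1_glue: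
  assumes B: "ed_bundle E X p" and q: "openin X q"
    and C: "\<And>c. c \<in> C \<Longrightarrow> openin X c"
    and f: "\<And>c. c \<in> C \<Longrightarrow> f c \<in> Gamma1 E X p c"
    and agree: "\<And>c d x. c \<in> C \<Longrightarrow> d \<in> C \<Longrightarrow> x \<in> c \<inter> d \<Longrightarrow> f c x = f d x"
    and dense: "q \<subseteq> X closure_of (\<Union>c\<in>C. c \<inter> q)"
  shows "\<exists>g \<in> Gamma1 E X p q. \<forall>c\<in>C. \<forall>x\<in>c \<inter> q. g x = f c x"
proof -
  have ED: "extremally_disconnected X"
    and K: "compact_space (Alexandroff_compactification E)"
      "Hausdorff_space (Alexandroff_compactification E)"
    using B by (auto simp: ed_bundle_def Hausdorff_space_Alexandroff_compactification)
  have f_cont: "continuous_map (subtopology X c) (Alexandroff_compactification E) (f c)"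
    if "c \<in> C" for c
    using f[OF that] by (simp add: Gamma1_def)
  obtain G where G: "continuous_map (subtopology X q) (Alexandroff_compactification E) G"
    and G_f: "\<forall>c\<in>C. \<forall>x\<in>c \<inter> q. G x = f c x"
    using extremally_disconnected_glue[OF ED K q C f_cont agree dense] by blast
  have "restrict G q \<in> Gamma1 E X p q"
  proof (rule Gamma1_memI_dense_cover[OF q C f dense])
    show "continuous_map (subtopology X q) (Alexandroff_compactification E) (restrict G q)"
      using G by (rule continuous_map_eq) simp
  qed (use G_f in auto)
  moreover have "\<forall>c\<in>C. \<forall>x\<in>c \<inter> q. restrict G q x = f c x"
    using G_f by simp
  ultimately show ?thesis
    by blast
qed

lemma Gamma1_eq_on_dense:
  assumes B: "ed_bundle E X p" and q: "openin X q"
    and g1: "g1 \<in> Gamma1 E X p q" and g2: "g2 \<in> Gamma1 E X p q"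
    and dense: "q \<subseteq> X closure_of S" and eq: "\<And>x. x \<in> S \<Longrightarrow> g1 x = g2 x"
  shows "g1 = g2"
proof
  fix x
  show "g1 x = g2 x"
  proof (cases "x \<in> q")
    case True
    have "Hausdorff_space (Alexandroff_compactification E)"
      using B by (simp add: ed_bundle_def Hausdorff_space_Alexandroff_compactification)
    moreover have "continuous_map (subtopology X q) (Alexandroff_compactification E) g1"
      "continuous_map (subtopology X q) (Alexandroff_compactification E) g2"
      using g1 g2 by (simp_all add: Gamma1_def)
    moreover have "x \<in> (subtopology X q) closure_of S"
      using True dense closure_of_subtopology_open[of X q S] q by blast
    ultimately show ?thesis
      using forall_in_closure_of_eq eq by metis
  next
    case False
    then show ?thesis
      using g1 g2 by (simp add: Gamma1_def)
  qed
qed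

lemma is_sheaf_for_Gamma1:
  assumes B: "ed_bundle E X p"
    and P_open: "\<And>c. c \<in> P \<Longrightarrow> openin X c"
    and P_Int: "\<And>c d. c \<in> P \<Longrightarrow> d \<in> P \<Longrightarrow> c \<inter> d \<noteq> {} \<Longrightarrow> c \<inter> d \<in> P"
    and Cov_dense: "\<And>q C. q \<in> P \<Longrightarrow> Cov C q \<Longrightarrow> q \<subseteq> X closure_of (\<Union>c\<in>C. c \<inter> q)"
    and Cov_sub: "\<And>q C. Cov C q \<Longrightarrow> C \<subseteq> P"
  shows "is_sheaf_for P (\<subseteq>) (Gamma1 E X p) restr_sec Cov"
  unfolding is_sheaf_for_def
proof (intro ballI allI impI, elim conjE)
  fix q C f
  assume q: "q \<in> P" and "Cov C q" and comp: "compatible_family P (\<subseteq>) (Gamma1 E X p) restr_sec C f"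
  then have CP: "C \<subseteq> P" and dense: "q \<subseteq> X closure_of (\<Union>c\<in>C. c \<inter> q)"
    using Cov_dense Cov_sub by blast+
  have "compatible_family P (\<subseteq>) (Gamma1 E X p) restr_sec C f \<longleftrightarrow>
      (\<forall>c\<in>C. f c \<in> Gamma1 E X p c) \<and> (\<forall>c\<in>C. \<forall>d\<in>C. \<forall>x\<in>c \<inter> d. f c x = f d x)"
    by (rule compatible_family_restr_sec_iff[OF CP]) (fact P_Int)
  then have f: "\<And>c. c \<in> C \<Longrightarrow> f c \<in> Gamma1 E X p c"
    and agree: "\<And>c d x. c \<in> C \<Longrightarrow> d \<in> C \<Longrightarrow> x \<in> c \<inter> d \<Longrightarrow> f c x = f d x"
    using comp by blast+
  have collation: "is_collation P (\<subseteq>) (Gamma1 E X p) restr_sec C f q g \<longleftrightarrow>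
      g \<in> Gamma1 E X p q \<and> (\<forall>c\<in>C. \<forall>x\<in>c \<inter> q. g x = f c x)" for g
    by (rule is_collation_restr_sec_iff[OF CP q]) (fact P_Int)
  obtain g where g: "g \<in> Gamma1 E X p q" "\<forall>c\<in>C. \<forall>x\<in>c \<inter> q. g x = f c x"
    using Gamma1_glue[OF B P_open[OF q] _ f agree dense] CP P_open by blast
  show "\<exists>!g. is_collation P (\<subseteq>) (Gamma1 E X p) restr_sec C f q g"
  proof (rule ex1I)
    show "is_collation P (\<subseteq>) (Gamma1 E X p) restr_sec C f q g"
      using collation g by blast
    fix g' assume "is_collation P (\<subseteq>) (Gamma1 E X p) restr_sec C f q g'"
    then have g': "g' \<in> Gamma1 E X p q" "\<forall>c\<in>C. \<forall>x\<in>c \<inter> q. g' x = f c x"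
      using collation by blast+
    show "g' = g"
    proof (rule Gamma1_eq_on_dense[OF B P_open[OF q] g'(1) g(1) dense])
      fix x assume "x \<in> (\<Union>c\<in>C. c \<inter> q)"
      then obtain c where "c \<in> C" "x \<in> c \<inter> q"
        by blast
      then have "g' x = f c x" "g x = f c x"
        using g(2) g'(2) by blast+
      then show "g' x = g x"
        by simp
    qed
  qed
qed

section \<open>Coverings with dense union\<close>

lemma extremally_disconnected_regular_open_iff:
  assumes "extremally_disconnected X"
  shows "regular_open X U \<longleftrightarrow> openin X U \<and> closedin X U"
proof
  assume U: "regular_open X U"
  then have "openin X U"
    unfolding regular_open_def by (metis openin_interior_of)
  moreover from this have "openin X (X closure_of U)"
    using assms by (simp add: extremally_disconnected_def)
  then have "X closure_of U = U"
    using U unfolding regular_open_def by (simp add: interior_of_openin)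
  then have "closedin X U"
    by (metis closedin_closure_of)
  ultimately show "openin X U \<and> closedin X U" ..
next
  assume "openin X U \<and> closedin X U"
  then show "regular_open X U"
    unfolding regular_open_def by (simp add: closure_of_closedin interior_of_openin)
qed

lemma closure_of_in_nonempty_regular_opens:
  assumes "extremally_disconnected X" "openin X S" "S \<noteq> {}"
  shows "X closure_of S \<in> nonempty_regular_opens X"
proof -
  have "openin X (X closure_of S)"
    using assms(1,2) by (simp add: extremally_disconnected_def)
  moreover have "S \<subseteq> X closure_of S"
    using assms(2) by (simp add: closure_of_subset openin_subset)
  ultimately show ?thesis
    using assms(1,3) extremally_disconnected_regular_open_iff
    by (fastforce simp: nonempty_regular_opens_def)
qed

lemma nonempty_regular_opens_Int:
  assumes "extremally_disconnected X" "c \<in> nonempty_regular_opens X" "d \<in> nonempty_regular_opens X"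
    "c \<inter> d \<noteq> {}"
  shows "c \<inter> d \<in> nonempty_regular_opens X"
  using assms extremally_disconnected_regular_open_iff[OF assms(1)]
  by (auto simp: nonempty_regular_opens_def)

lemma dense_covering_imp_dense_Union:
  assumes C: "dense_covering P (\<subseteq>) C q"
    and P: "\<And>c. c \<in> P \<Longrightarrow> openin X c \<and> c \<noteq> {}" and q: "openin X q"
    and shrink: "\<And>V. openin X V \<Longrightarrow> V \<noteq> {} \<Longrightarrow> V \<subseteq> q \<Longrightarrow> \<exists>q'\<in>P. q' \<subseteq> q \<and> q' \<subseteq> X closure_of V"
  shows "q \<subseteq> X closure_of (\<Union>c\<in>C. c \<inter> q)"
proof
  fix x assume x: "x \<in> q"
  show "x \<in> X closure_of (\<Union>c\<in>C. c \<inter> q)"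
    unfolding in_closure_of
  proof (intro conjI allI impI)
    show "x \<in> topspace X"
      using x openin_subset[OF q] by blast
    fix T assume T: "x \<in> T \<and> openin X T"
    then obtain q' where q': "q' \<in> P" "q' \<subseteq> q" "q' \<subseteq> X closure_of (T \<inter> q)"
      using shrink[of "T \<inter> q"] q x by blast
    then obtain s c where s: "s \<in> P" "c \<in> C" "s \<subseteq> q'" "s \<subseteq> c"
      using C unfolding dense_covering_def by blast
    then have "s \<inter> X closure_of (T \<inter> q) \<noteq> {}"
      using P[OF s(1)] q'(3) by blast
    then have "s \<inter> (T \<inter> q) \<noteq> {}"
      using openin_Int_closure_of_eq_empty P[OF s(1)] by blast
    then show "\<exists>y. y \<in> (\<Union>c\<in>C. c \<inter> q) \<and> y \<in> T"
      using s(2,4) by blast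
  qed
qed

lemma dense_covering_nonempty_opens_imp_dense_Union:
  assumes "q \<in> nonempty_opens X" "dense_covering (nonempty_opens X) (\<subseteq>) C q"
  shows "q \<subseteq> X closure_of (\<Union>c\<in>C. c \<inter> q)"
  using assms(2)
proof (rule dense_covering_imp_dense_Union)
  show "openin X c \<and> c \<noteq> {}" if "c \<in> nonempty_opens X" for c
    using that by (simp add: nonempty_opens_def)
  show "openin X q"
    using assms(1) by (simp add: nonempty_opens_def)
  fix V assume "openin X V" "V \<noteq> {}" "V \<subseteq> q"
  then show "\<exists>q'\<in>nonempty_opens X. q' \<subseteq> q \<and> q' \<subseteq> X closure_of V"
    by (intro bexI[of _ V]) (auto simp: nonempty_opens_def closure_of_subset openin_subset)
qed

lemma dense_covering_nonempty_regular_opens_imp_dense_Union: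
  assumes ED: "extremally_disconnected X"
    and "q \<in> nonempty_regular_opens X" "dense_covering (nonempty_regular_opens X) (\<subseteq>) C q"
  shows "q \<subseteq> X closure_of (\<Union>c\<in>C. c \<inter> q)"
proof -
  have q: "openin X q" "closedin X q"
    using assms(2) extremally_disconnected_regular_open_iff[OF ED]
    by (auto simp: nonempty_regular_opens_def)
  show ?thesis
    using assms(3)
  proof (rule dense_covering_imp_dense_Union[OF _ _ q(1)])
    show "openin X c \<and> c \<noteq> {}" if "c \<in> nonempty_regular_opens X" for c
      using that extremally_disconnected_regular_open_iff[OF ED]
      by (simp add: nonempty_regular_opens_def)
    fix V assume "openin X V" "V \<noteq> {}" "V \<subseteq> q"
    then show "\<exists>q'\<in>nonempty_regular_opens X. q' \<subseteq> q \<and> q' \<subseteq> X closure_of V"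
      using closure_of_in_nonempty_regular_opens[OF ED] closure_of_minimal[OF _ q(2)] by blast
  qed
qed

text \<open>The supremum of \<open>C\<close> in \<open>RO(X)\<^sup>+\<close> is the closure of \<open>\<Union>C\<close>.\<close>
lemma complete_covering_nonempty_regular_opens_imp_dense_Union:
  assumes ED: "extremally_disconnected X"
    and C: "complete_covering (nonempty_regular_opens X) (\<subseteq>) C q"
  shows "q \<subseteq> X closure_of (\<Union>c\<in>C. c \<inter> q)"
proof -
  have C_sub: "C \<subseteq> nonempty_regular_opens X" "C \<noteq> {}" "\<And>c. c \<in> C \<Longrightarrow> c \<subseteq> q"
    using C unfolding complete_covering_def by auto
  have sup: "\<And>u. u \<in> nonempty_regular_opens X \<Longrightarrow> \<forall>c\<in>C. c \<subseteq> u \<Longrightarrow> q \<subseteq> u"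
    using C unfolding complete_covering_def by blast
  have "openin X (\<Union>C)"
    using C_sub(1) extremally_disconnected_regular_open_iff[OF ED]
    by (auto simp: nonempty_regular_opens_def)
  moreover have "\<Union>C \<noteq> {}"
    using C_sub(1,2) by (auto simp: nonempty_regular_opens_def)
  ultimately have "X closure_of (\<Union>C) \<in> nonempty_regular_opens X"
    and "\<forall>c\<in>C. c \<subseteq> X closure_of (\<Union>C)"
    using closure_of_in_nonempty_regular_opens[OF ED] closure_of_subset[OF openin_subset]
    by blast+
  then have "q \<subseteq> X closure_of (\<Union>C)"
    by (rule sup)
  moreover have "(\<Union>c\<in>C. c \<inter> q) = \<Union>C"
    using C_sub(3) by blast
  ultimately show ?thesis
    by simp
qed

lemma is_sheaf_for_Gamma1_dense_nonempty_opens: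
  assumes "ed_bundle E X p"
  shows "is_sheaf_for (nonempty_opens X) (\<subseteq>) (Gamma1 E X p) restr_sec
    (dense_covering (nonempty_opens X) (\<subseteq>))"
proof (rule is_sheaf_for_Gamma1[OF assms])
  show "openin X c" if "c \<in> nonempty_opens X" for c
    using that by (simp add: nonempty_opens_def)
  show "c \<inter> d \<in> nonempty_opens X"
    if "c \<in> nonempty_opens X" "d \<in> nonempty_opens X" "c \<inter> d \<noteq> {}" for c d
    using that by (auto simp: nonempty_opens_def)
  show "q \<subseteq> X closure_of (\<Union>c\<in>C. c \<inter> q)"
    if "q \<in> nonempty_opens X" "dense_covering (nonempty_opens X) (\<subseteq>) C q" for q C
    using that by (rule dense_covering_nonempty_opens_imp_dense_Union)
qed (auto simp: dense_covering_def)

lemma is_sheaf_for_Gamma1_complete_nonempty_regular_opens: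
  assumes "ed_bundle E X p"
  shows "is_sheaf_for (nonempty_regular_opens X) (\<subseteq>) (Gamma1 E X p) restr_sec
    (complete_covering (nonempty_regular_opens X) (\<subseteq>))"
proof -
  have ED: "extremally_disconnected X"
    using assms by (simp add: ed_bundle_def)
  show ?thesis
  proof (rule is_sheaf_for_Gamma1[OF assms _ nonempty_regular_opens_Int[OF ED]])
    show "openin X c" if "c \<in> nonempty_regular_opens X" for c
      using that extremally_disconnected_regular_open_iff[OF ED]
      by (simp add: nonempty_regular_opens_def)
    show "q \<subseteq> X closure_of (\<Union>c\<in>C. c \<inter> q)"
      if "complete_covering (nonempty_regular_opens X) (\<subseteq>) C q" for q C
      using ED that by (rule complete_covering_nonempty_regular_opens_imp_dense_Union)
  qed (auto simp: complete_covering_def)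
qed

lemma is_sheaf_for_Gamma1_dense_nonempty_regular_opens:
  assumes "ed_bundle E X p"
  shows "is_sheaf_for (nonempty_regular_opens X) (\<subseteq>) (Gamma1 E X p) restr_sec
    (dense_covering (nonempty_regular_opens X) (\<subseteq>))"
proof -
  have ED: "extremally_disconnected X"
    using assms by (simp add: ed_bundle_def)
  show ?thesis
  proof (rule is_sheaf_for_Gamma1[OF assms _ nonempty_regular_opens_Int[OF ED]])
    show "openin X c" if "c \<in> nonempty_regular_opens X" for c
      using that extremally_disconnected_regular_open_iff[OF ED]
      by (simp add: nonempty_regular_opens_def)
    show "q \<subseteq> X closure_of (\<Union>c\<in>C. c \<inter> q)"
      if "q \<in> nonempty_regular_opens X" "dense_covering (nonempty_regular_opens X) (\<subseteq>) C q" for q C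
      using ED that by (rule dense_covering_nonempty_regular_opens_imp_dense_Union)
  qed (auto simp: dense_covering_def)
qed

theorem mainTheorem11:
  fixes E :: "'e topology" and X :: "'x topology" and p :: "'e \<Rightarrow> 'x"
  assumes "ed_bundle E X p"
  shows "is_sheaf_for (nonempty_opens X) (\<subseteq>) (Gamma1 E X p) restr_sec
            (dense_covering (nonempty_opens X) (\<subseteq>))
       \<and> is_sheaf_for (nonempty_regular_opens X) (\<subseteq>) (Gamma1 E X p) restr_sec
            (complete_covering (nonempty_regular_opens X) (\<subseteq>))
       \<and> is_sheaf_for (nonempty_regular_opens X) (\<subseteq>) (Gamma1 E X p) restr_sec
            (dense_covering (nonempty_regular_opens X) (\<subseteq>))"
  using is_sheaf_for_Gamma1_dense_nonempty_opens[OF assms]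
    is_sheaf_for_Gamma1_complete_nonempty_regular_opens[OF assms]
    is_sheaf_for_Gamma1_dense_nonempty_regular_opens[OF assms]
  by blast

end
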